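(* Let $\mathcal{G}^{c}=(\mathbb{C},\mathbb{E}^{c})$ be a C-DMG over DMGs, let $\mathbb{C}_X,\mathbb{C}_Y,\mathbb{C}_W$ be pairwise disjoint subsets of $\mathbb{C}$, and set $X=\bigcup_{C\in\mathbb{C}_X}C$, $Y=\bigcup_{C\in\mathbb{C}_Y}C$, $W=\bigcup_{C\in\mathbb{C}_W}C$. If $\mathbb{C}_X$ and $\mathbb{C}_Y$ are not $\sigma$-separated by $\mathbb{C}_W$ in $\mathcal{G}^{c}$, then there exists a DMG $\mathcal{G}=(\mathbb{V},\mathbb{E})$ compatible with $\mathcal{G}^{c}$ in which $X$ and $Y$ are not $\sigma$-separated by $W$.
   Context: A directed mixed graph (DMG) $\mathcal{G}=(\mathbb{V},\mathbb{E})$ has directed edges $\to$ and bidirected edges $\leftrightarrow$, cycles allowed; the DMGs considered are those induced by input/output structural causal models (ioSCMs, Forré–Mooij 2020): vertices are the endogenous and input variables, $U\to V$ if $U$ is an argument of the causal mechanism of $V$, and $U\leftrightarrow V$ if some latent variable is a parent of both. A C-DMG over DMGs $\mathcal{G}^c=(\mathbb{C},\mathbb{E}^c)$ is obtained from such a DMG $\mathcal{G}=(\mathbb{V},\mathbb{E})$ as follows: $\mathbb{C}$ is a partition of $\mathbb{V}$ into nonempty clusters, and for all $C_i,C_j\in\mathbb{C}$ (possibly equal) the edge $C_i\to C_j$ (resp. $C_i\leftrightarrow C_j$) is in $\mathbb{E}^c$ iff there exist $V_i\in C_i,V_j\in C_j$ with $V_i\to V_j$ (resp. $V_i\leftrightarrow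 V_j$) in $\mathbb{E}$; such $\mathcal{G}$ is called compatible with $\mathcal{G}^c$. In any such graph, ancestors and descendants include the vertex itself, and the strongly connected component of $V$ is $\mathrm{Sc}(V)=\mathrm{Anc}(V)\cap\mathrm{Desc}(V)$. Write $A\mathbin{*\!\!\to} B$ for an edge $A\to B$ or $A\leftrightarrow B$, and $A\mathbin{\leftarrow\!\!*} B$ for $A\leftarrow B$ or $A\leftrightarrow B$. A walk $\langle V_1,\dots,V_n\rangle$ is $\sigma$-blocked by a set $W$ if: (1) $V_1\in W$ or $V_n\in W$; or (2) for some $1<i<n$, $V_{i-1}\mathbin{*\!\!\to}V_i\mathbin{\leftarrow\!\!*}V_{i+1}$ on the walk and $V_i\notin W$; or (3) for some $1<i<n$, $V_{i-1}\leftarrow V_i\mathbin{\leftarrow\!\!*}V_{i+1}$ on the walk and $V_i\in W\setminus \mathrm{Sc}(V_{i-1})$; or (4) for some $1<i<n$, $V_{i-1}\mathbin{*\!\!\to}V_i\to V_{i+1}$ on the walk and $V_i\in W\setminus\mathrm{Sc}(V_{i+1})$; or (5) for some $1<i<n$, $V_{i-1}\leftarrow V_i\to V_{i+1}$ on the walk and $V_i\in W\setminus(\mathrm{Sc}(V_{i-1})\cap\mathrm{Sc}(V_{i+1}))$. For disjoint vertex sets $X,Y,W$, $W$ $\sigma$-separates $X$ and $Y$ if every walk from a vertex of $X$ to a vertex of $Y$ is $\sigma$-blocked by $W$. *)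

theory Defs
  imports Main "HOL-Library.Disjoint_Sets"
begin

text \<open>A graph is given by a vertex set V, a set D of directed edges
  ((a,b) \<in> D means a \<rightarrow> b) and a set B of bidirected edges ((a,b) \<in> B means a \<leftrightarrow> b).\<close>

definition ioscm_dmg :: "'v set \<Rightarrow> ('v \<times> 'v) set \<Rightarrow> ('v \<times> 'v) set \<Rightarrow> bool" where
  "ioscm_dmg V D B \<longleftrightarrow> finite V \<and> D \<subseteq> V \<times> V \<and> B \<subseteq> V \<times> V \<and>
     irrefl D \<and> irrefl B \<and> sym B"

definition compatible ::
  "'v set \<Rightarrow> ('v \<times> 'v) set \<Rightarrow> ('v \<times> 'v) set \<Rightarrow>
   'v set set \<Rightarrow> ('v set \<times> 'v set) set \<Rightarrow> ('v set \<times> 'v set) set \<Rightarrow> bool" where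
  "compatible V D B C DC BC \<longleftrightarrow> partition_on V C \<and>
     DC = {(Ci, Cj). Ci \<in> C \<and> Cj \<in> C \<and> (\<exists>a\<in>Ci. \<exists>b\<in>Cj. (a, b) \<in> D)} \<and>
     BC = {(Ci, Cj). Ci \<in> C \<and> Cj \<in> C \<and> (\<exists>a\<in>Ci. \<exists>b\<in>Cj. (a, b) \<in> B)}"

definition is_cdmg :: "'v set set \<Rightarrow> ('v set \<times> 'v set) set \<Rightarrow> ('v set \<times> 'v set) set \<Rightarrow> bool" where
  "is_cdmg C DC BC \<longleftrightarrow> (\<exists>V D B. ioscm_dmg V D B \<and> compatible V D B C DC BC)"

datatype mark = Fwd | Bwd | Bid

definition edge_ok :: "('v \<times> 'v) set \<Rightarrow> ('v \<times> 'v) set \<Rightarrow> 'v \<Rightarrow> mark \<Rightarrow> 'v \<Rightarrow> bool" where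
  "edge_ok D B u m v = (case m of Fwd \<Rightarrow> (u, v) \<in> D | Bwd \<Rightarrow> (v, u) \<in> D | Bid \<Rightarrow> (u, v) \<in> B)"

definition is_walk :: "'v set \<Rightarrow> ('v \<times> 'v) set \<Rightarrow> ('v \<times> 'v) set \<Rightarrow> 'v list \<Rightarrow> mark list \<Rightarrow> bool" where
  "is_walk V D B vs es \<longleftrightarrow> vs \<noteq> [] \<and> set vs \<subseteq> V \<and> length es = length vs - 1 \<and>
     (\<forall>i < length es. edge_ok D B (vs ! i) (es ! i) (vs ! Suc i))"

definition anc :: "('v \<times> 'v) set \<Rightarrow> 'v \<Rightarrow> 'v set" where
  "anc D v = {u. (u, v) \<in> D\<^sup>*}"

definition desc :: "('v \<times> 'v) set \<Rightarrow> 'v \<Rightarrow> 'v set" where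
  "desc D v = {u. (v, u) \<in> D\<^sup>*}"

definition sc :: "('v \<times> 'v) set \<Rightarrow> 'v \<Rightarrow> 'v set" where
  "sc D v = anc D v \<inter> desc D v"

definition head_left :: "mark \<Rightarrow> bool" where "head_left m \<longleftrightarrow> m = Fwd \<or> m = Bid"
  \<comment> \<open>edge to the left of a vertex has an arrowhead at that vertex\<close>
definition head_right :: "mark \<Rightarrow> bool" where "head_right m \<longleftrightarrow> m = Bwd \<or> m = Bid"
  \<comment> \<open>edge to the right of a vertex has an arrowhead at that vertex\<close>

definition sigma_blocked :: "('v \<times> 'v) set \<Rightarrow> 'v list \<Rightarrow> mark list \<Rightarrow> 'v set \<Rightarrow> bool" where
  "sigma_blocked D vs es W \<longleftrightarrow>
     hd vs \<in> W \<or> last vs \<in> W \<or>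
     (\<exists>i. 0 < i \<and> i < length vs - 1 \<and>
        ((head_left (es ! (i - 1)) \<and> head_right (es ! i) \<and> vs ! i \<notin> W) \<or>
         (es ! (i - 1) = Bwd \<and> head_right (es ! i) \<and>
            vs ! i \<in> W - sc D (vs ! (i - 1))) \<or>
         (head_left (es ! (i - 1)) \<and> es ! i = Fwd \<and>
            vs ! i \<in> W - sc D (vs ! Suc i)) \<or>
         (es ! (i - 1) = Bwd \<and> es ! i = Fwd \<and>
            vs ! i \<in> W - (sc D (vs ! (i - 1)) \<inter> sc D (vs ! Suc i)))))"

definition sigma_separated ::
  "'v set \<Rightarrow> ('v \<times> 'v) set \<Rightarrow> ('v \<times> 'v) set \<Rightarrow> 'v set \<Rightarrow> 'v set \<Rightarrow> 'v set \<Rightarrow> bool" where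
  "sigma_separated V D B X Y W \<longleftrightarrow>
     (\<forall>vs es. is_walk V D B vs es \<and> hd vs \<in> X \<and> last vs \<in> Y \<longrightarrow> sigma_blocked D vs es W)"

end

theory Submission
  imports Defs
begin

(* Realize every cluster edge X -> Y (resp. X <-> Y) by all edges a -> b (resp. a <-> b) between
   distinct members a of X and b of Y. This blow-up is a DMG compatible with the cluster graph, and
   an unblocked cluster walk lifts to it by picking a member of each cluster, adjacent picks
   distinct (a cluster loop X -> X or X <-> X comes from two distinct members of X). A lifted
   vertex lies in W iff its cluster lies in C_W, and adjacent clusters that are strongly connected
   have all their members strongly connected in the blow-up; hence every blocking condition met
   by the lifted walk is already met by the cluster walk. *)

lemma partition_on_part_eq:
  assumes "partition_on V C" "X \<in> C" "Y \<in> C" "a \<in> X" "a \<in> Y"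
  shows "X = Y"
  using disjointD[OF partition_onD2[OF assms(1)]] assms(2-5) by blast

lemma mem_Union_parts_iff:
  assumes "partition_on V C" "CW \<subseteq> C" "X \<in> C" "a \<in> X"
  shows "a \<in> \<Union>CW \<longleftrightarrow> X \<in> CW"
  using partition_on_part_eq[OF assms(1)] assms(2-4) by blast

definition cluster_rel :: "'v set set \<Rightarrow> ('v \<times> 'v) set \<Rightarrow> ('v set \<times> 'v set) set" where
  "cluster_rel C E = {(X, Y). X \<in> C \<and> Y \<in> C \<and> (\<exists>a\<in>X. \<exists>b\<in>Y. (a, b) \<in> E)}"

lemma compatible_iff_cluster_rel:
  "compatible V D B C DC BC \<longleftrightarrow>
     partition_on V C \<and> DC = cluster_rel C D \<and> BC = cluster_rel C B"
  by (simp add: compatible_def cluster_rel_def)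

definition blowup :: "('v set \<times> 'v set) set \<Rightarrow> ('v \<times> 'v) set" where
  "blowup R = {(a, b). a \<noteq> b \<and> (\<exists>(X, Y)\<in>R. a \<in> X \<and> b \<in> Y)}"

lemma cluster_rel_blowup:
  assumes "partition_on V C" "irrefl E"
  shows "cluster_rel C (blowup (cluster_rel C E)) = cluster_rel C E"
proof
  show "cluster_rel C (blowup (cluster_rel C E)) \<subseteq> cluster_rel C E"
    using partition_on_part_eq[OF assms(1)]
    by (fastforce simp: cluster_rel_def blowup_def)
  show "cluster_rel C E \<subseteq> cluster_rel C (blowup (cluster_rel C E))"
  proof (rule subrelI)
    fix X Y assume XY: "(X, Y) \<in> cluster_rel C E"
    then obtain a b where "a \<in> X" "b \<in> Y" "(a, b) \<in> E"
      by (auto simp: cluster_rel_def)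
    moreover have "a \<noteq> b"
      using \<open>(a, b) \<in> E\<close> assms(2) by (auto simp: irrefl_def)
    ultimately have "(a, b) \<in> blowup (cluster_rel C E)"
      using XY by (auto simp: blowup_def)
    then show "(X, Y) \<in> cluster_rel C (blowup (cluster_rel C E))"
      using XY \<open>a \<in> X\<close> \<open>b \<in> Y\<close> by (auto simp: cluster_rel_def)
  qed
qed

lemma ioscm_dmg_blowup:
  assumes "partition_on V C" "finite V" "sym B"
  shows "ioscm_dmg V (blowup (cluster_rel C D)) (blowup (cluster_rel C B))"
proof -
  have "sym (cluster_rel C B)"
    using assms(3) by (auto simp: sym_def cluster_rel_def)
  then have "sym (blowup (cluster_rel C B))"
    by (auto simp: sym_def blowup_def)
  then show ?thesis
    using partition_onD1[OF assms(1)] assms(2)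
    by (auto simp: ioscm_dmg_def blowup_def cluster_rel_def irrefl_def)
qed

lemma blowup_compatible:
  assumes "ioscm_dmg V D B" "compatible V D B C DC BC"
  shows "ioscm_dmg V (blowup DC) (blowup BC)" "compatible V (blowup DC) (blowup BC) C DC BC"
proof -
  have part: "partition_on V C" and DC: "DC = cluster_rel C D" and BC: "BC = cluster_rel C B"
    using assms(2) by (simp_all add: compatible_iff_cluster_rel)
  have "finite V" "sym B" "irrefl D" "irrefl B"
    using assms(1) by (simp_all add: ioscm_dmg_def)
  then show "ioscm_dmg V (blowup DC) (blowup BC)" "compatible V (blowup DC) (blowup BC) C DC BC"
    unfolding DC BC compatible_iff_cluster_rel
    by (simp_all add: ioscm_dmg_blowup[OF part] cluster_rel_blowup[OF part] part)
qed

lemma rtrancl_blowup: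
  assumes "partition_on V C" "R \<subseteq> C \<times> C" "(X, Y) \<in> R\<^sup>+" "a \<in> X" "b \<in> Y"
  shows "(a, b) \<in> (blowup R)\<^sup>*"
  using assms(3,5)
proof (induction arbitrary: b rule: trancl_induct)
  case (base Y)
  then show ?case
    using assms(4) by (cases "a = b") (auto simp: blowup_def)
next
  case (step Y Z)
  have "Y \<noteq> {}"
    using step.hyps(2) assms(2) partition_onD3[OF assms(1)] by auto
  then obtain m where "m \<in> Y" by blast
  then have "(a, m) \<in> (blowup R)\<^sup>*" by (rule step.IH)
  moreover have "m = b \<or> (m, b) \<in> blowup R"
    using \<open>m \<in> Y\<close> step.hyps(2) step.prems by (auto simp: blowup_def)
  ultimately show ?case by auto
qed

lemma sc_iff_rtrancl: "b \<in> sc D a \<longleftrightarrow> (b, a) \<in> D\<^sup>* \<and> (a, b) \<in> D\<^sup>*"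
  by (simp add: sc_def anc_def desc_def)

(* The edge between X and Y matters only for X = Y: it is then a loop, which the blow-up
   turns into a cycle through any two members of X. *)
lemma sc_blowup:
  assumes "partition_on V C" "R \<subseteq> C \<times> C" "Y \<in> sc R X" "(X, Y) \<in> R \<or> (Y, X) \<in> R"
    and "a \<in> X" "b \<in> Y"
  shows "b \<in> sc (blowup R) a"
proof -
  have "(X, Y) \<in> R\<^sup>+ \<and> (Y, X) \<in> R\<^sup>+"
  proof (cases "X = Y")
    case True
    then show ?thesis using assms(4) by auto
  next
    case False
    then show ?thesis using assms(3) by (auto simp: sc_iff_rtrancl rtrancl_eq_or_trancl)
  qed
  then show ?thesis
    using rtrancl_blowup[OF assms(1,2)] assms(5,6) by (auto simp: sc_iff_rtrancl)
qed

lemma edge_ok_blowup: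
  assumes "edge_ok R S X m Y" "a \<in> X" "b \<in> Y" "a \<noteq> b"
  shows "edge_ok (blowup R) (blowup S) a m b"
  using assms by (cases m) (auto simp: edge_ok_def blowup_def)

definition sigma_blocked_at :: "('v \<times> 'v) set \<Rightarrow> 'v list \<Rightarrow> mark list \<Rightarrow> 'v set \<Rightarrow> nat \<Rightarrow> bool" where
  "sigma_blocked_at D vs es W i \<longleftrightarrow>
     (head_left (es ! (i - 1)) \<and> head_right (es ! i) \<and> vs ! i \<notin> W) \<or>
     (es ! (i - 1) = Bwd \<and> head_right (es ! i) \<and> vs ! i \<in> W - sc D (vs ! (i - 1))) \<or>
     (head_left (es ! (i - 1)) \<and> es ! i = Fwd \<and> vs ! i \<in> W - sc D (vs ! Suc i)) \<or>
     (es ! (i - 1) = Bwd \<and> es ! i = Fwd \<and>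
        vs ! i \<in> W - (sc D (vs ! (i - 1)) \<inter> sc D (vs ! Suc i)))"

lemma sigma_blocked_iff_blocked_at:
  "sigma_blocked D vs es W \<longleftrightarrow>
     hd vs \<in> W \<or> last vs \<in> W \<or> (\<exists>i. 0 < i \<and> i < length vs - 1 \<and> sigma_blocked_at D vs es W i)"
  by (simp add: sigma_blocked_def sigma_blocked_at_def)

lemma sigma_blocked_transfer:
  assumes len: "length vs = length cs" and "cs \<noteq> []"
    and W: "\<And>i. i < length cs \<Longrightarrow> vs ! i \<in> W \<longleftrightarrow> cs ! i \<in> W'"
    and sc_left: "\<And>i. 0 < i \<Longrightarrow> i < length cs - 1 \<Longrightarrow> es ! (i - 1) = Bwd \<Longrightarrow>
       cs ! i \<in> sc R (cs ! (i - 1)) \<Longrightarrow> vs ! i \<in> sc D (vs ! (i - 1))"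
    and sc_right: "\<And>i. 0 < i \<Longrightarrow> i < length cs - 1 \<Longrightarrow> es ! i = Fwd \<Longrightarrow>
       cs ! i \<in> sc R (cs ! Suc i) \<Longrightarrow> vs ! i \<in> sc D (vs ! Suc i)"
    and "sigma_blocked D vs es W"
  shows "sigma_blocked R cs es W'"
proof -
  have "vs \<noteq> []"
    using len \<open>cs \<noteq> []\<close> by auto
  then have "hd vs \<in> W \<longleftrightarrow> hd cs \<in> W'" "last vs \<in> W \<longleftrightarrow> last cs \<in> W'"
    using W[of 0] W[of "length cs - 1"] len \<open>cs \<noteq> []\<close>
    by (simp_all add: hd_conv_nth last_conv_nth)
  moreover have "sigma_blocked_at R cs es W' i"
    if "0 < i" "i < length cs - 1" "sigma_blocked_at D vs es W i" for i
    using that W[of i] sc_left[of i] sc_right[of i] by (auto simp: sigma_blocked_at_def)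
  ultimately show ?thesis
    using assms(6) unfolding sigma_blocked_iff_blocked_at len by blast
qed

lemma exists_adjacent_distinct_choice:
  assumes "\<And>i. i < length Xs \<Longrightarrow> Xs ! i \<noteq> {}"
    and "\<And>i b. Suc i < length Xs \<Longrightarrow> b \<in> Xs ! Suc i \<Longrightarrow> \<exists>a\<in>Xs ! i. a \<noteq> b"
  shows "\<exists>xs. length xs = length Xs \<and> (\<forall>i < length Xs. xs ! i \<in> Xs ! i) \<and>
           (\<forall>i. Suc i < length Xs \<longrightarrow> xs ! i \<noteq> xs ! Suc i)"
  using assms
proof (induction Xs)
  case Nil
  then show ?case by simp
next
  case (Cons X Xs)
  then obtain xs where xs: "length xs = length Xs" "\<forall>i < length Xs. xs ! i \<in> Xs ! i"
    "\<forall>i. Suc i < length Xs \<longrightarrow> xs ! i \<noteq> xs ! Suc i"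
    by fastforce
  obtain a where a: "a \<in> X" "Xs \<noteq> [] \<Longrightarrow> a \<noteq> xs ! 0"
  proof (cases Xs)
    case Nil
    then show ?thesis using Cons.prems(1)[of 0] that by auto
  next
    case (Cons Y Ys)
    moreover have "xs ! 0 \<in> Y"
      using xs(1,2) Cons by auto
    ultimately show ?thesis
      using Cons.prems(2)[of 0 "xs ! 0"] that by auto
  qed
  have "\<forall>i. Suc i < length (X # Xs) \<longrightarrow> (a # xs) ! i \<noteq> (a # xs) ! Suc i"
    using a(2) xs(3) by (auto simp: nth_Cons split: nat.split)
  moreover have "\<forall>i < length (X # Xs). (a # xs) ! i \<in> (X # Xs) ! i"
    using a(1) xs(2) by (auto simp: nth_Cons split: nat.split)
  ultimately show ?case
    using xs(1) by (metis length_Cons)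
qed

lemma cluster_rel_loop_not_singleton:
  assumes "(X, X) \<in> cluster_rel C E" "irrefl E"
  shows "\<exists>a\<in>X. a \<noteq> b"
proof -
  obtain a a' where "a \<in> X" "a' \<in> X" "(a, a') \<in> E"
    using assms(1) by (auto simp: cluster_rel_def)
  moreover have "a \<noteq> a'"
    using \<open>(a, a') \<in> E\<close> assms(2) by (auto simp: irrefl_def)
  ultimately show ?thesis
    by (cases "a = b") auto
qed

lemma cluster_walk_other_member:
  assumes "ioscm_dmg V D B" "compatible V D B C DC BC" "is_walk C DC BC cs es"
    and i: "Suc i < length cs" and b: "b \<in> cs ! Suc i"
  shows "\<exists>a\<in>cs ! i. a \<noteq> b"
proof -
  have part: "partition_on V C" and DC: "DC = cluster_rel C D" and BC: "BC = cluster_rel C B"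
    using assms(2) by (simp_all add: compatible_iff_cluster_rel)
  have csC: "cs ! i \<in> C" "cs ! Suc i \<in> C"
    using assms(3) i by (auto simp: is_walk_def)
  have edge: "edge_ok DC BC (cs ! i) (es ! i) (cs ! Suc i)"
    using assms(3) i by (auto simp: is_walk_def)
  show ?thesis
  proof (cases "cs ! i = cs ! Suc i")
    case True
    then have "(cs ! i, cs ! i) \<in> cluster_rel C D \<or> (cs ! i, cs ! i) \<in> cluster_rel C B"
      using edge DC BC by (cases "es ! i") (auto simp: edge_ok_def)
    moreover have "irrefl D" "irrefl B"
      using assms(1) by (simp_all add: ioscm_dmg_def)
    ultimately show ?thesis
      using cluster_rel_loop_not_singleton by metis
  next
    case False
    obtain a where "a \<in> cs ! i"
      using csC(1) partition_onD3[OF part] by (metis all_not_in_conv)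
    moreover have "a \<noteq> b"
      using partition_on_part_eq[OF part csC] False calculation b by auto
    ultimately show ?thesis by blast
  qed
qed

lemma lift_cluster_walk:
  assumes "ioscm_dmg V D B" "compatible V D B C DC BC" and walk: "is_walk C DC BC cs es"
  obtains vs where "is_walk V (blowup DC) (blowup BC) vs es"
    and "length vs = length cs" and "\<And>i. i < length cs \<Longrightarrow> vs ! i \<in> cs ! i"
    and "hd vs \<in> hd cs" and "last vs \<in> last cs"
proof -
  have part: "partition_on V C"
    using assms(2) by (simp add: compatible_def)
  have csC: "\<And>i. i < length cs \<Longrightarrow> cs ! i \<in> C"
    using walk by (auto simp: is_walk_def)
  have edges: "\<And>i. Suc i < length cs \<Longrightarrow> edge_ok DC BC (cs ! i) (es ! i) (cs ! Suc i)"
    using walk by (auto simp: is_walk_def)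
  have nonempty: "\<And>i. i < length cs \<Longrightarrow> cs ! i \<noteq> {}"
    using csC partition_onD3[OF part] by metis
  obtain vs where len: "length vs = length cs" and mem: "\<forall>i < length cs. vs ! i \<in> cs ! i"
    and distinct: "\<forall>i. Suc i < length cs \<longrightarrow> vs ! i \<noteq> vs ! Suc i"
    using exists_adjacent_distinct_choice[OF nonempty cluster_walk_other_member[OF assms]] by blast
  have "set vs \<subseteq> V"
  proof
    fix v assume "v \<in> set vs"
    then obtain i where "i < length cs" "v = vs ! i"
      using len by (auto simp: in_set_conv_nth)
    then show "v \<in> V"
      using mem csC partition_onD1[OF part] by blast
  qed
  moreover have "edge_ok (blowup DC) (blowup BC) (vs ! i) (es ! i) (vs ! Suc i)"
    if "Suc i < length cs" for i
    using edge_ok_blowup[OF edges[OF that]] mem distinct that by simp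
  ultimately have walk': "is_walk V (blowup DC) (blowup BC) vs es"
    using walk len by (auto simp: is_walk_def)
  have "cs \<noteq> []" "vs \<noteq> []"
    using walk len by (auto simp: is_walk_def)
  then have "hd vs \<in> hd cs" "last vs \<in> last cs"
    using mem len by (simp_all add: hd_conv_nth last_conv_nth)
  with walk' show thesis
    using that len mem by blast
qed

lemma sigma_blocked_of_blowup:
  assumes "compatible V D B C DC BC" "CW \<subseteq> C"
    and walk: "is_walk C DC BC cs es"
    and len: "length vs = length cs" and mem: "\<And>i. i < length cs \<Longrightarrow> vs ! i \<in> cs ! i"
    and "sigma_blocked (blowup DC) vs es (\<Union>CW)"
  shows "sigma_blocked DC cs es CW"
proof (rule sigma_blocked_transfer[OF len])
  have part: "partition_on V C" and "DC \<subseteq> C \<times> C"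
    using assms(1) by (auto simp: compatible_iff_cluster_rel cluster_rel_def)
  have csC: "\<And>i. i < length cs \<Longrightarrow> cs ! i \<in> C"
    using walk by (auto simp: is_walk_def)
  have edges: "\<And>i. Suc i < length cs \<Longrightarrow> edge_ok DC BC (cs ! i) (es ! i) (cs ! Suc i)"
    using walk by (auto simp: is_walk_def)
  show "cs \<noteq> []"
    using walk by (simp add: is_walk_def)
  show "vs ! i \<in> \<Union>CW \<longleftrightarrow> cs ! i \<in> CW" if "i < length cs" for i
    using mem_Union_parts_iff[OF part \<open>CW \<subseteq> C\<close> csC[OF that] mem[OF that]] .
  show "vs ! i \<in> sc (blowup DC) (vs ! (i - 1))"
    if "0 < i" "i < length cs - 1" "es ! (i - 1) = Bwd" "cs ! i \<in> sc DC (cs ! (i - 1))" for i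
  proof -
    have "(cs ! i, cs ! (i - 1)) \<in> DC"
      using edges[of "i - 1"] that by (simp add: edge_ok_def)
    then show ?thesis
      using sc_blowup[OF part \<open>DC \<subseteq> C \<times> C\<close> that(4)] mem that(1,2) by simp
  qed
  show "vs ! i \<in> sc (blowup DC) (vs ! Suc i)"
    if "0 < i" "i < length cs - 1" "es ! i = Fwd" "cs ! i \<in> sc DC (cs ! Suc i)" for i
  proof -
    have "(cs ! i, cs ! Suc i) \<in> DC"
      using edges[of i] that by (simp add: edge_ok_def)
    then show ?thesis
      using sc_blowup[OF part \<open>DC \<subseteq> C \<times> C\<close> that(4)] mem that(2) by simp
  qed
qed fact

theorem theorem2:
  fixes C :: "'v set set"
    and DC BC :: "('v set \<times> 'v set) set"
    and CX CY CW :: "'v set set"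
  assumes "is_cdmg C DC BC"
    and "CX \<subseteq> C" and "CY \<subseteq> C" and "CW \<subseteq> C"
    and "CX \<inter> CY = {}" and "CX \<inter> CW = {}" and "CY \<inter> CW = {}"
    and "\<not> sigma_separated C DC BC CX CY CW"
  shows "\<exists>V D B. ioscm_dmg V D B \<and> compatible V D B C DC BC \<and>
           \<not> sigma_separated V D B (\<Union>CX) (\<Union>CY) (\<Union>CW)"
proof -
  obtain V D B where dmg: "ioscm_dmg V D B" and comp: "compatible V D B C DC BC"
    using assms(1) unfolding is_cdmg_def by blast
  obtain cs es where walk: "is_walk C DC BC cs es" and "hd cs \<in> CX" "last cs \<in> CY"
    and unblocked: "\<not> sigma_blocked DC cs es CW"
    using assms(8) unfolding sigma_separated_def by blast
  obtain vs where walk': "is_walk V (blowup DC) (blowup BC) vs es"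
    and len: "length vs = length cs" and mem: "\<And>i. i < length cs \<Longrightarrow> vs ! i \<in> cs ! i"
    and "hd vs \<in> hd cs" "last vs \<in> last cs"
    using lift_cluster_walk[OF dmg comp walk] by blast
  have "hd vs \<in> \<Union>CX" "last vs \<in> \<Union>CY"
    using \<open>hd vs \<in> hd cs\<close> \<open>last vs \<in> last cs\<close> \<open>hd cs \<in> CX\<close> \<open>last cs \<in> CY\<close> by blast+
  moreover have "\<not> sigma_blocked (blowup DC) vs es (\<Union>CW)"
    using sigma_blocked_of_blowup[OF comp assms(4) walk len mem] unblocked by blast
  ultimately show ?thesis
    using blowup_compatible[OF dmg comp] walk' unfolding sigma_separated_def by blast
qed

end
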